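(* Let $(A,\cdot)$ be a commutative associative algebra and $(P,Q)$ an admissible pair on it. Then $Q(x)\cdot y-x\cdot Q(y)=P(x)\cdot y-x\cdot P(y)$ for all $x,y\in A$, and the bracket $[x,y]=Q(x)\cdot y-x\cdot Q(y)$ makes $(A,[-,-])$ a Lie algebra. Moreover, if $\mathcal B$ is a symmetric bilinear form on $A$ which is invariant on $(A,\cdot)$, i.e. $\mathcal B(x\cdot y,z)=\mathcal B(x,y\cdot z)$ for all $x,y,z$, then $\mathcal B$ is a commutative 2-cocycle on $(A,[-,-])$.
   Context: All vector spaces are finite-dimensional over a field $\mathbb F$ of characteristic $0$. An admissible pair on a commutative associative algebra $(A,\cdot)$ is a pair of linear maps $P,Q:A\to A$ with $Q(x\cdot y)=Q(x)\cdot y+x\cdot P(y)$ for all $x,y\in A$. A commutative 2-cocycle on a Lie algebra is a symmetric bilinear form $\mathcal B$ with $\mathcal B([x,y],z)+\mathcal B([y,z],x)+\mathcal B([z,x],y)=0$. *)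

theory Defs
  imports Main "HOL.Vector_Spaces"
begin

definition bilinear_map :: "('k::field \<Rightarrow> 'v::ab_group_add \<Rightarrow> 'v) \<Rightarrow> ('k \<Rightarrow> 'w::ab_group_add \<Rightarrow> 'w)
    \<Rightarrow> ('v \<Rightarrow> 'v \<Rightarrow> 'w) \<Rightarrow> bool" where
  "bilinear_map s t f \<longleftrightarrow> (\<forall>x. Vector_Spaces.linear s t (f x)) \<and> (\<forall>y. Vector_Spaces.linear s t (\<lambda>x. f x y))"

definition comm_assoc_algebra :: "('k::field \<Rightarrow> 'v::ab_group_add \<Rightarrow> 'v) \<Rightarrow> ('v \<Rightarrow> 'v \<Rightarrow> 'v) \<Rightarrow> bool" where
  "comm_assoc_algebra s m \<longleftrightarrow> bilinear_map s s m \<and> (\<forall>x y. m x y = m y x)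
     \<and> (\<forall>x y z. m (m x y) z = m x (m y z))"

definition admissible_pair :: "('k::field \<Rightarrow> 'v::ab_group_add \<Rightarrow> 'v) \<Rightarrow> ('v \<Rightarrow> 'v \<Rightarrow> 'v)
    \<Rightarrow> ('v \<Rightarrow> 'v) \<Rightarrow> ('v \<Rightarrow> 'v) \<Rightarrow> bool" where
  "admissible_pair s m P Q \<longleftrightarrow> Vector_Spaces.linear s s P \<and> Vector_Spaces.linear s s Q
     \<and> (\<forall>x y. Q (m x y) = m (Q x) y + m x (P y))"

definition lie_algebra :: "('k::field \<Rightarrow> 'v::ab_group_add \<Rightarrow> 'v) \<Rightarrow> ('v \<Rightarrow> 'v \<Rightarrow> 'v) \<Rightarrow> bool" where
  "lie_algebra s br \<longleftrightarrow> bilinear_map s s br \<and> (\<forall>x. br x x = 0)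
     \<and> (\<forall>x y z. br x (br y z) + br y (br z x) + br z (br x y) = 0)"

definition commutative_2cocycle :: "('k::field \<Rightarrow> 'v::ab_group_add \<Rightarrow> 'v) \<Rightarrow> ('v \<Rightarrow> 'v \<Rightarrow> 'v)
    \<Rightarrow> ('v \<Rightarrow> 'v \<Rightarrow> 'k) \<Rightarrow> bool" where
  "commutative_2cocycle s br B \<longleftrightarrow> bilinear_map s (*) B \<and> (\<forall>x y. B x y = B y x)
     \<and> (\<forall>x y z. B (br x y) z + B (br y z) x + B (br z x) y = 0)"

end

theory Submission
  imports Defs
begin

text \<open>Write [x,y] = Q x * y - x * Q y. Applying admissibility to Q(x y) = Q(y x) gives
Q x * y + x * P y = Q y * x + y * P x, which is the second formula for the bracket.
For the Jacobi identity, admissibility gives Q [y,z] = z * P(Q y) - y * P(Q z), because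
the terms Q y * Q z cancel; the cyclic sum then splits into the terms with two factors Q
and the terms with P(Q -), and each part vanishes by commutativity and associativity alone.
For the cocycle identity, invariance and symmetry make B(a b, c) invariant under cyclic
permutations of a, b, c, so the six terms cancel in pairs, whatever the map Q is.\<close>

locale comm_assoc_mult =
  fixes mult :: "'v::ab_group_add \<Rightarrow> 'v \<Rightarrow> 'v"  (infixl \<open>\<cdot>\<close> 70)
  assumes add_right: "a \<cdot> (b + c) = a \<cdot> b + a \<cdot> c"
    and commute: "a \<cdot> b = b \<cdot> a"
    and assoc: "a \<cdot> b \<cdot> c = a \<cdot> (b \<cdot> c)"
begin

lemma diff_right: "a \<cdot> (b - c) = a \<cdot> b - a \<cdot> c"
  by (metis add_right add_diff_cancel diff_add_cancel)

lemma left_commute: "a \<cdot> (b \<cdot> c) = b \<cdot> (a \<cdot> c)"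
  by (metis assoc commute)

lemmas mult_ac = assoc commute left_commute

lemma bracket_self: "Q x \<cdot> x - x \<cdot> Q x = 0"
  by (simp add: commute)

lemma invariant_form_cocycle:
  fixes B :: "'v \<Rightarrow> 'v \<Rightarrow> 'k::ab_group_add"
  assumes diff: "\<And>a b c. B (a - b) c = B a c - B b c"
    and symmetric: "\<And>a b. B a b = B b a"
    and invariant: "\<And>a b c. B (a \<cdot> b) c = B a (b \<cdot> c)"
  shows "B (Q x \<cdot> y - x \<cdot> Q y) z + B (Q y \<cdot> z - y \<cdot> Q z) x + B (Q z \<cdot> x - z \<cdot> Q x) y = 0"
proof -
  have rotate: "B (a \<cdot> b) c = B (b \<cdot> c) a" for a b c
    using invariant symmetric by metis
  show ?thesis
    using rotate[of z "Q x" y] rotate[of x "Q y" z] rotate[of y "Q z" x] by (simp add: diff)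
qed

context
  fixes P Q :: "'v \<Rightarrow> 'v"
  assumes admissible: "\<And>a b. Q (a \<cdot> b) = Q a \<cdot> b + a \<cdot> P b"
begin

lemma admissible_bracket_eq: "Q x \<cdot> y - x \<cdot> Q y = P x \<cdot> y - x \<cdot> P y"
proof -
  have "Q x \<cdot> y + x \<cdot> P y = Q y \<cdot> x + y \<cdot> P x"
    using admissible[of x y] admissible[of y x] by (simp add: commute)
  then show ?thesis
    by (simp add: commute[of x] commute[of y] algebra_simps)
qed

lemma admissible_Q_bracket:
  assumes "\<And>a b. Q (a - b) = Q a - Q b"
  shows "Q (Q y \<cdot> z - y \<cdot> Q z) = z \<cdot> P (Q y) - y \<cdot> P (Q z)"
  using admissible[of z "Q y"] admissible[of y "Q z"]
  by (simp add: assms commute[of "Q y" z] commute[of "Q z" "Q y"])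

lemma admissible_jacobi:
  assumes "\<And>a b. Q (a - b) = Q a - Q b"
  shows "Q x \<cdot> (Q y \<cdot> z - y \<cdot> Q z) - x \<cdot> Q (Q y \<cdot> z - y \<cdot> Q z)
       + (Q y \<cdot> (Q z \<cdot> x - z \<cdot> Q x) - y \<cdot> Q (Q z \<cdot> x - z \<cdot> Q x))
       + (Q z \<cdot> (Q x \<cdot> y - x \<cdot> Q y) - z \<cdot> Q (Q x \<cdot> y - x \<cdot> Q y)) = 0"
proof -
  have two_Q: "Q x \<cdot> (Q y \<cdot> z - y \<cdot> Q z) + Q y \<cdot> (Q z \<cdot> x - z \<cdot> Q x) + Q z \<cdot> (Q x \<cdot> y - x \<cdot> Q y) = 0"
    by (simp add: diff_right mult_ac)
  have PQ: "x \<cdot> (z \<cdot> P (Q y) - y \<cdot> P (Q z)) + y \<cdot> (x \<cdot> P (Q z) - z \<cdot> P (Q x))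
      + z \<cdot> (y \<cdot> P (Q x) - x \<cdot> P (Q y)) = 0"
    by (simp add: diff_right mult_ac)
  have regroup: "a1 - b1 + (a2 - b2) + (a3 - b3) = (a1 + a2 + a3) - (b1 + b2 + b3)" for a1 a2 a3 b1 b2 b3 :: 'v
    by (simp add: algebra_simps)
  show ?thesis
    unfolding admissible_Q_bracket[OF assms] regroup two_Q PQ by simp
qed

end

end

lemma comm_assoc_algebra_imp_comm_assoc_mult:
  assumes "comm_assoc_algebra s m"
  shows "comm_assoc_mult m"
proof
  from assms have "\<And>x. Vector_Spaces.linear s s (m x)"
    and "\<And>a b. m a b = m b a" "\<And>a b c. m (m a b) c = m a (m b c)"
    unfolding comm_assoc_algebra_def bilinear_map_def by auto
  then show "m a (b + c) = m a b + m a c" "m a b = m b a" "m (m a b) c = m a (m b c)" for a b c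
    unfolding linear_iff by auto
qed

lemma bilinear_map_bracket:
  assumes "bilinear_map s s m" and Q: "Vector_Spaces.linear s s Q"
  shows "bilinear_map s s (\<lambda>x y. m (Q x) y - m x (Q y))"
proof -
  interpret vector_space_pair s s
    using Q by (simp add: linear_iff vector_space_pair_def)
  have left: "Vector_Spaces.linear s s (\<lambda>x. m x y)" and right: "Vector_Spaces.linear s s (m x)" for x y
    using assms(1) unfolding bilinear_map_def by auto
  show ?thesis
    unfolding bilinear_map_def
    using Vector_Spaces.linear_compose[OF Q left] Vector_Spaces.linear_compose[OF Q right]
    by (auto simp: o_def intro!: linear_compose_sub left right)
qed

lemma lie_algebra_admissible_pair:
  assumes alg: "comm_assoc_algebra s m" and adm: "admissible_pair s m P Q"
  shows "lie_algebra s (\<lambda>x y. m (Q x) y - m x (Q y))"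
proof -
  interpret comm_assoc_mult m
    using alg by (rule comm_assoc_algebra_imp_comm_assoc_mult)
  from adm have Q: "Vector_Spaces.linear s s Q"
    and admissible: "\<And>a b. Q (m a b) = m (Q a) b + m a (P b)"
    unfolding admissible_pair_def by auto
  have Q_diff: "\<And>a b. Q (a - b) = Q a - Q b"
    using module_hom.diff[OF Q[unfolded linear_iff_module_hom]] .
  have "bilinear_map s s m"
    using alg unfolding comm_assoc_algebra_def by blast
  then show ?thesis
    unfolding lie_algebra_def
    using bilinear_map_bracket[OF _ Q] bracket_self admissible_jacobi[OF admissible Q_diff]
    by blast
qed

lemma commutative_2cocycle_invariant_form:
  fixes B :: "'v::ab_group_add \<Rightarrow> 'v \<Rightarrow> 'k::field"
  assumes alg: "comm_assoc_algebra s m" and B: "bilinear_map s (*) B"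
    and symmetric: "\<forall>x y. B x y = B y x" and invariant: "\<forall>x y z. B (m x y) z = B x (m y z)"
  shows "commutative_2cocycle s (\<lambda>x y. m (Q x) y - m x (Q y)) B"
proof -
  interpret comm_assoc_mult m
    using alg by (rule comm_assoc_algebra_imp_comm_assoc_mult)
  have B_diff: "B (a - b) c = B a c - B b c" for a b c
    using B module_hom.diff unfolding bilinear_map_def linear_iff_module_hom by metis
  show ?thesis
    unfolding commutative_2cocycle_def
    using B symmetric invariant_form_cocycle[OF B_diff symmetric[rule_format] invariant[rule_format]]
    by blast
qed

theorem proposition3p24:
  fixes scale :: "'k::field_char_0 \<Rightarrow> 'v::ab_group_add \<Rightarrow> 'v"
    and mult :: "'v \<Rightarrow> 'v \<Rightarrow> 'v"
    and P Q :: "'v \<Rightarrow> 'v"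
  assumes vs: "vector_space scale"
    and fd: "\<exists>basis. finite_dimensional_vector_space scale basis"
    and alg: "comm_assoc_algebra scale mult"
    and adm: "admissible_pair scale mult P Q"
  shows "(\<forall>x y. mult (Q x) y - mult x (Q y) = mult (P x) y - mult x (P y))
    \<and> lie_algebra scale (\<lambda>x y. mult (Q x) y - mult x (Q y))
    \<and> (\<forall>B :: 'v \<Rightarrow> 'v \<Rightarrow> 'k. bilinear_map scale (*) B \<and> (\<forall>x y. B x y = B y x)
          \<and> (\<forall>x y z. B (mult x y) z = B x (mult y z))
        \<longrightarrow> commutative_2cocycle scale (\<lambda>x y. mult (Q x) y - mult x (Q y)) B)"
proof (intro conjI allI impI)
  interpret comm_assoc_mult mult
    using alg by (rule comm_assoc_algebra_imp_comm_assoc_mult)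
  show "mult (Q x) y - mult x (Q y) = mult (P x) y - mult x (P y)" for x y
    using adm unfolding admissible_pair_def by (blast intro: admissible_bracket_eq)
  show "lie_algebra scale (\<lambda>x y. mult (Q x) y - mult x (Q y))"
    using alg adm by (rule lie_algebra_admissible_pair)
  show "commutative_2cocycle scale (\<lambda>x y. mult (Q x) y - mult x (Q y)) B"
    if "bilinear_map scale (*) B \<and> (\<forall>x y. B x y = B y x) \<and> (\<forall>x y z. B (mult x y) z = B x (mult y z))"
    for B :: "'v \<Rightarrow> 'v \<Rightarrow> 'k"
    using alg that by (blast intro: commutative_2cocycle_invariant_form)
qed

end
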